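(* Any invertible matrix $B\in GL(n,\mathbb{C})$ can be written as a product $B=C_1C_2$ of two invertible diagonalizable matrices $C_1$ and $C_2$ with distinct eigenvalues. One of the $C_i$ may be chosen in a Zariski open set. *)

theory Defs
  imports "HOL-Analysis.Analysis"
begin

text \<open>Square complex matrices of size n = CARD('n) are represented as complex^'n^'n.\<close>

definition is_diagonal :: "complex^'n^'n \<Rightarrow> bool" where
  "is_diagonal D \<longleftrightarrow> (\<forall>i j. i \<noteq> j \<longrightarrow> D $ i $ j = 0)"

definition diagonalizable :: "complex^'n^'n \<Rightarrow> bool" where
  "diagonalizable A \<longleftrightarrow>
     (\<exists>(P::complex^'n^'n) (D::complex^'n^'n). invertible P \<and> is_diagonal D \<and> A = P ** D ** matrix_inv P)"

definition eigenvalues :: "complex^'n^'n \<Rightarrow> complex set" where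
  "eigenvalues A = {c. \<exists>v::complex^'n. v \<noteq> 0 \<and> A *v v = c *s v}"

definition distinct_eigenvalues :: "complex^'n^'n \<Rightarrow> bool" where
  "distinct_eigenvalues A \<longleftrightarrow> card (eigenvalues A) = CARD('n)"

inductive poly_fun :: "(complex^'n^'n \<Rightarrow> complex) \<Rightarrow> bool" where
  const: "poly_fun (\<lambda>A. c)"
| entry: "poly_fun (\<lambda>A. A $ i $ j)"
| add: "poly_fun p \<Longrightarrow> poly_fun q \<Longrightarrow> poly_fun (\<lambda>A. p A + q A)"
| mult: "poly_fun p \<Longrightarrow> poly_fun q \<Longrightarrow> poly_fun (\<lambda>A. p A * q A)"

definition zariski_open :: "(complex^'n^'n) set \<Rightarrow> bool" where
  "zariski_open U \<longleftrightarrow>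
     (\<exists>F. (\<forall>p\<in>F. poly_fun p) \<and> U = - {A. \<forall>p\<in>F. p A = 0})"

end

theory Submission
  imports
    Defs
    "Subresultants.Subresultant_Gcd"
    "HOL-Computational_Algebra.Field_as_Ring"
    "HOL-Computational_Algebra.Fundamental_Theorem_Algebra"
begin

text \<open>For invertible \<open>C\<close>, the eigenvalues of \<open>C\<inverse> B\<close> are the roots of \<open>det (x C - B)\<close>, a
  polynomial of degree \<open>n\<close> with leading coefficient \<open>det C\<close>, and they are pairwise distinct
  iff the resultant of this polynomial and its derivative is nonzero. The leading coefficient
  and this resultant are polynomial in the entries of \<open>C\<close>, and so is the analogous condition
  for \<open>C\<close> itself. Hence the \<open>C\<close> for
  which \<open>C\<close> and \<open>C\<inverse> B\<close> are invertible with \<open>n\<close> distinct eigenvalues (and therefore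
  diagonalizable) form a Zariski open set. It is nonempty because each of the two conditions
  holds somewhere (at a diagonal \<open>D\<close> with distinct entries, resp. at \<open>B D\<inverse>\<close>) and affine
  space is irreducible.\<close>

no_notation Matrix.vec_index (infixl "$" 100)
hide_const (open) Determinant.det Matrix.mat

section \<open>Polynomial functions on matrix space\<close>

lemma poly_fun_sum:
  "finite S \<Longrightarrow> (\<And>s. s \<in> S \<Longrightarrow> poly_fun (f s)) \<Longrightarrow> poly_fun (\<lambda>A. \<Sum>s\<in>S. f s A)"
  by (induction S rule: finite_induct) (simp_all add: poly_fun.const poly_fun.add)

lemma poly_fun_prod:
  "finite S \<Longrightarrow> (\<And>s. s \<in> S \<Longrightarrow> poly_fun (f s)) \<Longrightarrow> poly_fun (\<lambda>A. \<Prod>s\<in>S. f s A)"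
  by (induction S rule: finite_induct) (simp_all add: poly_fun.const poly_fun.mult)

lemma poly_fun_uminus: "poly_fun p \<Longrightarrow> poly_fun (\<lambda>A. - p A)"
  using poly_fun.mult[OF poly_fun.const[of "-1"]] by simp

lemma poly_fun_det:
  "(\<And>i j. poly_fun (\<lambda>A. M A $ i $ j)) \<Longrightarrow> poly_fun (\<lambda>A. det (M A))"
  unfolding Determinants.det_def
  by (intro poly_fun_sum poly_fun.mult poly_fun_prod poly_fun.const) (auto simp: finite_permutations)

definition poly_fun_coeffs :: "(complex^'n^'n \<Rightarrow> complex poly) \<Rightarrow> bool" where
  "poly_fun_coeffs P \<longleftrightarrow> (\<forall>k. poly_fun (\<lambda>A. coeff (P A) k))"

lemma poly_fun_coeffs_const: "poly_fun_coeffs (\<lambda>A. p)"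
  unfolding poly_fun_coeffs_def by (simp add: poly_fun.const)

lemma poly_fun_coeffs_linear:
  assumes "poly_fun a" "poly_fun b"
  shows "poly_fun_coeffs (\<lambda>A. [:a A, b A:])"
  unfolding poly_fun_coeffs_def
proof
  fix k
  have "(\<lambda>A. coeff [:a A, b A:] k) = (if k = 0 then a else if k = 1 then b else (\<lambda>A. 0))"
    by (rule ext) (cases k; auto simp: coeff_pCons split: nat.split)
  then show "poly_fun (\<lambda>A. coeff [:a A, b A:] k)"
    using assms by (simp add: poly_fun.const)
qed

lemma poly_fun_coeffs_add:
  "poly_fun_coeffs P \<Longrightarrow> poly_fun_coeffs Q \<Longrightarrow> poly_fun_coeffs (\<lambda>A. P A + Q A)"
  unfolding poly_fun_coeffs_def by (simp add: poly_fun.add)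

lemma poly_fun_coeffs_mult:
  "poly_fun_coeffs P \<Longrightarrow> poly_fun_coeffs Q \<Longrightarrow> poly_fun_coeffs (\<lambda>A. P A * Q A)"
  unfolding poly_fun_coeffs_def coeff_mult by (auto intro!: poly_fun_sum poly_fun.mult)

lemma poly_fun_coeffs_sum:
  "finite S \<Longrightarrow> (\<And>s. s \<in> S \<Longrightarrow> poly_fun_coeffs (f s)) \<Longrightarrow> poly_fun_coeffs (\<lambda>A. \<Sum>s\<in>S. f s A)"
  by (induction S rule: finite_induct) (simp_all add: poly_fun_coeffs_const poly_fun_coeffs_add)

lemma poly_fun_coeffs_prod:
  "finite S \<Longrightarrow> (\<And>s. s \<in> S \<Longrightarrow> poly_fun_coeffs (f s)) \<Longrightarrow> poly_fun_coeffs (\<lambda>A. \<Prod>s\<in>S. f s A)"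
  by (induction S rule: finite_induct) (simp_all add: poly_fun_coeffs_const poly_fun_coeffs_mult)

lemma poly_fun_coeffs_pderiv: "poly_fun_coeffs P \<Longrightarrow> poly_fun_coeffs (\<lambda>A. pderiv (P A))"
  unfolding poly_fun_coeffs_def coeff_pderiv by (auto intro!: poly_fun.mult poly_fun.const)

lemma poly_fun_coeffs_det:
  "(\<And>i j. poly_fun_coeffs (\<lambda>A. M A $ i $ j)) \<Longrightarrow> poly_fun_coeffs (\<lambda>A. det (M A))"
  unfolding Determinants.det_def
  by (intro poly_fun_coeffs_sum poly_fun_coeffs_mult poly_fun_coeffs_prod poly_fun_coeffs_const)
    (auto simp: finite_permutations)

lemma poly_fun_resultant_sub:
  assumes "poly_fun_coeffs P" "poly_fun_coeffs Q"
  shows "poly_fun (\<lambda>A. resultant_sub m k (P A) (Q A))"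
proof -
  define E where "E = (\<lambda>A (i::nat) (j::nat). if i < k
       then if i \<le> j \<and> j - i \<le> m then coeff (P A) (m + i - j) else 0
       else if i - k \<le> j \<and> j \<le> i then coeff (Q A) (i - j) else 0)"
  have entries: "poly_fun (\<lambda>A. E A i j)" for i j
    using assms unfolding E_def poly_fun_coeffs_def
    by (cases "i < k"; cases "i \<le> j \<and> j - i \<le> m"; cases "i - k \<le> j \<and> j \<le> i")
      (auto simp: poly_fun.const)
  have "resultant_sub m k (P A) (Q A) =
      (\<Sum>p | p permutes {0..<m+k}. of_int (sign p) * (\<Prod>i=0..<m+k. E A i (p i)))" for A
    unfolding resultant_sub_def Determinant.det_def sylvester_mat_sub_def E_def
    by (auto intro!: sum.cong prod.cong simp: permutes_in_image)
  then show ?thesis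
    using entries
    by (simp only:) (intro poly_fun_sum poly_fun.mult poly_fun_prod poly_fun.const;
        auto simp: finite_permutations)
qed

lemma poly_fun_on_line:
  assumes "poly_fun p"
  shows "\<exists>r. \<forall>t. p (\<chi> i j. A $ i $ j + t * D $ i $ j) = poly r t"
  using assms
proof (induction p rule: poly_fun.induct)
  case (const c)
  show ?case by (intro exI[of _ "[:c:]"]) simp
next
  case (entry i j)
  show ?case by (intro exI[of _ "[:A $ i $ j, D $ i $ j:]"]) simp
next
  case (add p q)
  then obtain r s where "\<forall>t. p (\<chi> i j. A $ i $ j + t * D $ i $ j) = poly r t"
    "\<forall>t. q (\<chi> i j. A $ i $ j + t * D $ i $ j) = poly s t" by blast
  then show ?case by (intro exI[of _ "r + s"]) simp
next
  case (mult p q)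
  then obtain r s where "\<forall>t. p (\<chi> i j. A $ i $ j + t * D $ i $ j) = poly r t"
    "\<forall>t. q (\<chi> i j. A $ i $ j + t * D $ i $ j) = poly s t" by blast
  then show ?case by (intro exI[of _ "r * s"]) simp
qed

text \<open>Irreducibility of affine space: restricted to the line through \<open>X\<close> and \<open>Y\<close>, \<open>p\<close> and
  \<open>q\<close> become nonzero univariate polynomials, whose product has a non-root.\<close>

lemma poly_fun_common_nonzero:
  fixes p q :: "complex^'n^'n \<Rightarrow> complex"
  assumes "poly_fun p" "poly_fun q" "p X \<noteq> 0" "q Y \<noteq> 0"
  shows "\<exists>Z. p Z \<noteq> 0 \<and> q Z \<noteq> 0"
proof -
  define L where "L t = (\<chi> i j. X $ i $ j + t * (Y - X) $ i $ j)" for t :: complex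
  have L0: "L 0 = X" and L1: "L 1 = Y"
    by (simp_all add: L_def Finite_Cartesian_Product.vec_eq_iff)
  obtain r where r: "\<forall>t. p (L t) = poly r t"
    using poly_fun_on_line[OF assms(1)] unfolding L_def by blast
  obtain s where s: "\<forall>t. q (L t) = poly s t"
    using poly_fun_on_line[OF assms(2)] unfolding L_def by blast
  have "r \<noteq> 0" using r assms(3) L0 by (metis poly_0)
  moreover have "s \<noteq> 0" using s assms(4) L1 by (metis poly_0)
  ultimately obtain t where "poly (r * s) t \<noteq> 0"
    using poly_all_0_iff_0 by (metis mult_eq_0_iff)
  then show ?thesis using r s by (intro exI[of _ "L t"]) simp
qed


section \<open>Counting roots with a resultant\<close>

lemma card_roots_eq_degree_iff_rsquarefree:
  fixes p :: "complex poly"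
  assumes "p \<noteq> 0"
  shows "card {z. poly p z = 0} = degree p \<longleftrightarrow> rsquarefree p"
proof -
  let ?R = "{z. poly p z = 0}"
  have fin: "finite ?R" using assms by (rule poly_roots_finite)
  have pos: "order z p \<ge> 1" if "z \<in> ?R" for z using assms that order_root[of p z] by simp
  have "degree p = size (proots p)" by (rule size_proots_complex[symmetric])
  also have "\<dots> = (\<Sum>z\<in>set_mset (proots p). count (proots p) z)"
    by (rule size_multiset_overloaded_eq)
  also have "\<dots> = (\<Sum>z\<in>?R. order z p)" using assms by simp
  also have "\<dots> = (\<Sum>z\<in>?R. 1 + (order z p - 1))"
    using pos by (intro sum.cong refl) (metis le_add_diff_inverse)
  also have "\<dots> = card ?R + (\<Sum>z\<in>?R. order z p - 1)"
    by (subst sum.distrib) simp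
  finally have "card ?R = degree p \<longleftrightarrow> (\<forall>z\<in>?R. order z p = 1)"
    using fin pos by (auto simp: le_antisym)
  also have "\<dots> \<longleftrightarrow> rsquarefree p"
  proof -
    have "order z p = 0 \<longleftrightarrow> z \<notin> ?R" for z using assms order_root[of p z] by auto
    then show ?thesis using assms unfolding rsquarefree_def by metis
  qed
  finally show ?thesis .
qed

lemma resultant_pderiv_nonzero_iff:
  fixes p :: "complex poly"
  assumes "p \<noteq> 0"
  shows "resultant p (pderiv p) \<noteq> 0 \<longleftrightarrow> rsquarefree p"
proof -
  have "degree (gcd p (pderiv p)) \<noteq> 0 \<longleftrightarrow> (\<exists>a. poly p a = 0 \<and> poly (pderiv p) a = 0)"
  proof
    assume "degree (gcd p (pderiv p)) \<noteq> 0"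
    then obtain a where "poly (gcd p (pderiv p)) a = 0"
      using alg_closed_imp_poly_has_root by blast
    then have "[:-a, 1:] dvd gcd p (pderiv p)" by (simp add: poly_eq_0_iff_dvd)
    then show "\<exists>a. poly p a = 0 \<and> poly (pderiv p) a = 0"
      by (meson dvd_trans gcd_dvd1 gcd_dvd2 poly_eq_0_iff_dvd)
  next
    assume "\<exists>a. poly p a = 0 \<and> poly (pderiv p) a = 0"
    then obtain a where "[:-a, 1:] dvd gcd p (pderiv p)" by (auto simp: poly_eq_0_iff_dvd)
    moreover have "gcd p (pderiv p) \<noteq> 0" using assms by simp
    ultimately have "degree [:-a, 1:] \<le> degree (gcd p (pderiv p))" by (rule dvd_imp_degree_le)
    then show "degree (gcd p (pderiv p)) \<noteq> 0" by simp
  qed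
  then show ?thesis unfolding rsquarefree_roots using resultant_0_gcd[of p "pderiv p"] by blast
qed

text \<open>The formal degrees \<open>n\<close> and \<open>n - 1\<close> (instead of the actual ones) make this depend
  polynomially on the coefficients of a family of polynomials of degree at most \<open>n\<close>.\<close>

definition sylvester_discriminant :: "nat \<Rightarrow> complex poly \<Rightarrow> complex" where
  "sylvester_discriminant n p = resultant_sub n (n - 1) p (pderiv p)"

lemma sylvester_discriminant_nonzero_iff:
  assumes "degree p \<le> n" "coeff p n \<noteq> 0"
  shows "sylvester_discriminant n p \<noteq> 0 \<longleftrightarrow> card {z. poly p z = 0} = n"
proof -
  have deg: "degree p = n" using assms by (meson le_antisym le_degree)
  then have "sylvester_discriminant n p = resultant p (pderiv p)"
    by (simp add: sylvester_discriminant_def resultant_sub degree_pderiv)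
  moreover have "p \<noteq> 0" using assms by auto
  ultimately show ?thesis
    using resultant_pderiv_nonzero_iff[of p] card_roots_eq_degree_iff_rsquarefree[of p] deg by simp
qed

lemma poly_fun_sylvester_discriminant:
  "poly_fun_coeffs P \<Longrightarrow> poly_fun (\<lambda>A. sylvester_discriminant n (P A))"
  unfolding sylvester_discriminant_def by (intro poly_fun_resultant_sub poly_fun_coeffs_pderiv)

section \<open>Inverses, determinants and eigenvalues\<close>

lemma matrix_inv_right: "invertible A \<Longrightarrow> A ** matrix_inv A = mat 1"
  and matrix_inv_left: "invertible A \<Longrightarrow> matrix_inv A ** A = mat 1"
  unfolding invertible_def matrix_inv_def by (metis (mono_tags, lifting) someI_ex)+

lemma invertible_matrix_inv: "invertible A \<Longrightarrow> invertible (matrix_inv A)"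
  using matrix_inv_left matrix_inv_right invertible_def by blast

lemma invertible_mat_1: "invertible (mat 1 :: 'a::semiring_1^'n^'n)"
  unfolding invertible_def by (metis matrix_mul_lid)

lemma matrix_inv_mat_1: "matrix_inv (mat 1 :: 'a::semiring_1^'n^'n) = mat 1"
  using matrix_inv_left[OF invertible_mat_1] by simp

lemma matrix_inv_mult_vector_eq_iff:
  "invertible A \<Longrightarrow> matrix_inv A *v x = y \<longleftrightarrow> x = A *v y"
  by (metis matrix_inv_left matrix_inv_right matrix_vector_mul_assoc matrix_vector_mul_lid)

lemma det_eq_0_iff_nontrivial_kernel:
  "det (A::'a::field^'n^'n) = 0 \<longleftrightarrow> (\<exists>v. v \<noteq> 0 \<and> A *v v = 0)"
  by (meson invertible_det_nz invertible_left_inverse matrix_left_invertible_ker)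

lemma prod_linear_degree_coeff:
  "finite S \<Longrightarrow> degree (\<Prod>i\<in>S. [:a i, b i:]) \<le> card S \<and>
     coeff (\<Prod>i\<in>S. [:a i, b i:]) (card S) = (\<Prod>i\<in>S. b i)"
proof (induction S rule: finite_induct)
  case empty
  then show ?case by simp
next
  case (insert x S)
  define P where "P = (\<Prod>i\<in>S. [:a i, b i:])"
  have "degree ([:a x, b x:] * P) \<le> degree [:a x, b x:] + degree P" by (rule degree_mult_le)
  also have "\<dots> \<le> Suc (card S)" using insert.IH by (simp add: P_def degree_pCons_le)
  finally have "degree ([:a x, b x:] * P) \<le> Suc (card S)" .
  moreover have "coeff P (Suc (card S)) = 0" using insert.IH by (simp add: P_def coeff_eq_0)
  ultimately show ?case using insert by (simp add: P_def mult_pCons_left)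
qed

definition pencil_poly :: "complex^'n^'n \<Rightarrow> complex^'n^'n \<Rightarrow> complex poly" where
  "pencil_poly M N = det (\<chi> i j. [:M $ i $ j, N $ i $ j:])"

lemma poly_pencil_poly: "poly (pencil_poly M N) c = det (\<chi> i j. M $ i $ j + c * N $ i $ j)"
  unfolding pencil_poly_def Determinants.det_def by (simp add: poly_sum poly_prod)

lemma degree_pencil_poly: "degree (pencil_poly M N) \<le> CARD('n)"
  and coeff_pencil_poly: "coeff (pencil_poly M N) CARD('n) = det N"
  for M N :: "complex^'n^'n"
proof -
  have permutation_term: "degree (\<Prod>i\<in>UNIV. [:M $ i $ p i, N $ i $ p i:]) \<le> CARD('n) \<and>
      coeff (\<Prod>i\<in>UNIV. [:M $ i $ p i, N $ i $ p i:]) CARD('n) = (\<Prod>i\<in>UNIV. N $ i $ p i)"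
    for p :: "'n \<Rightarrow> 'n"
    using prod_linear_degree_coeff[of "UNIV :: 'n set" "\<lambda>i. M $ i $ p i" "\<lambda>i. N $ i $ p i"]
    by simp
  then have "degree (of_int (sign p) * (\<Prod>i\<in>UNIV. [:M $ i $ p i, N $ i $ p i:])) \<le> CARD('n)"
    for p :: "'n \<Rightarrow> 'n"
    using degree_mult_le[of "of_int (sign p) :: complex poly"] by (simp add: of_int_poly)
  then show "degree (pencil_poly M N) \<le> CARD('n)"
    unfolding pencil_poly_def Determinants.det_def by (auto intro!: degree_sum_le)
  show "coeff (pencil_poly M N) CARD('n) = det N"
    unfolding pencil_poly_def Determinants.det_def using permutation_term
    by (simp add: coeff_sum of_int_poly)
qed

lemma poly_fun_coeffs_pencil_poly:
  assumes "\<And>i j. poly_fun (\<lambda>A. M A $ i $ j)" "\<And>i j. poly_fun (\<lambda>A. N A $ i $ j)"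
  shows "poly_fun_coeffs (\<lambda>A. pencil_poly (M A) (N A))"
  unfolding pencil_poly_def by (rule poly_fun_coeffs_det) (simp add: poly_fun_coeffs_linear assms)

lemma eigenvalues_eq_pencil_roots:
  assumes "invertible N"
  shows "eigenvalues (matrix_inv N ** M) = {c. poly (pencil_poly (- M) N) c = 0}"
proof -
  have "(matrix_inv N ** M) *v v = c *s v \<longleftrightarrow> (\<chi> i j. (- M) $ i $ j + c * N $ i $ j) *v v = 0"
    for c v
  proof -
    have "(\<chi> i j. (- M) $ i $ j + c * N $ i $ j) *v v = c *s (N *v v) - M *v v"
      by (simp add: Finite_Cartesian_Product.vec_eq_iff matrix_vector_mult_def sum.distrib
          sum_subtractf sum_distrib_left sum_negf algebra_simps)
    then show ?thesis
      using assms
      by (simp add: matrix_vector_mul_assoc[symmetric] matrix_inv_mult_vector_eq_iff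
          vector_scalar_commute eq_commute[of _ "M *v v"])
  qed
  then show ?thesis
    unfolding eigenvalues_def poly_pencil_poly det_eq_0_iff_nontrivial_kernel by auto
qed

definition distinct_eigenvalues_poly :: "complex^'n^'n \<Rightarrow> complex^'n^'n \<Rightarrow> complex" where
  "distinct_eigenvalues_poly M N = det N * sylvester_discriminant CARD('n) (pencil_poly (- M) N)"

lemma distinct_eigenvalues_poly_nonzero_iff:
  fixes M N :: "complex^'n^'n"
  shows "distinct_eigenvalues_poly M N \<noteq> 0 \<longleftrightarrow>
     invertible N \<and> distinct_eigenvalues (matrix_inv N ** M)"
proof (cases "invertible N")
  case True
  then have "det N \<noteq> 0" by (simp add: invertible_det_nz)
  then have "coeff (pencil_poly (- M) N) CARD('n) \<noteq> 0" by (simp add: coeff_pencil_poly)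
  then have "sylvester_discriminant CARD('n) (pencil_poly (- M) N) \<noteq> 0 \<longleftrightarrow>
      card {c. poly (pencil_poly (- M) N) c = 0} = CARD('n)"
    by (rule sylvester_discriminant_nonzero_iff[OF degree_pencil_poly])
  then show ?thesis
    using True \<open>det N \<noteq> 0\<close>
    by (simp add: distinct_eigenvalues_poly_def distinct_eigenvalues_def eigenvalues_eq_pencil_roots)
next
  case False
  then show ?thesis by (simp add: distinct_eigenvalues_poly_def invertible_det_nz)
qed

lemma poly_fun_distinct_eigenvalues_poly:
  assumes "\<And>i j. poly_fun (\<lambda>A. M A $ i $ j)" "\<And>i j. poly_fun (\<lambda>A. N A $ i $ j)"
  shows "poly_fun (\<lambda>A. distinct_eigenvalues_poly (M A) (N A))"
  unfolding distinct_eigenvalues_poly_def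
  by (intro poly_fun.mult poly_fun_det poly_fun_sylvester_discriminant poly_fun_coeffs_pencil_poly)
    (simp_all add: assms poly_fun_uminus)

section \<open>Distinct eigenvalues and diagonalizability\<close>

lemma eigenvectors_independent:
  fixes M :: "'a::field^'n^'n" and v :: "'k \<Rightarrow> 'a^'n"
  assumes "finite K" "inj_on lam K"
    and "\<And>k. k \<in> K \<Longrightarrow> M *v v k = lam k *s v k" "\<And>k. k \<in> K \<Longrightarrow> v k \<noteq> 0"
    and "(\<Sum>k\<in>K. x k *s v k) = 0"
  shows "\<forall>k\<in>K. x k = 0"
  using assms
proof (induction K arbitrary: x rule: finite_induct)
  case empty then show ?case by simp
next
  case (insert j K)
  let ?S = "\<Sum>k\<in>insert j K. x k *s v k"
  have "(\<Sum>k\<in>K. (x k * (lam k - lam j)) *s v k) = (\<Sum>k\<in>insert j K. (x k * (lam k - lam j)) *s v k)"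
    using insert.hyps by simp
  also have "\<dots> = M *v ?S - lam j *s ?S"
  proof -
    have "M *v ?S = (\<Sum>k\<in>insert j K. (lam k * x k) *s v k)"
      using insert.prems(2) by (simp add: vec.sum vector_scalar_commute vector_smult_assoc mult.commute)
    moreover have "lam j *s ?S = (\<Sum>k\<in>insert j K. (lam j * x k) *s v k)"
      by (simp add: Finite_Cartesian_Product.vec_eq_iff sum_component sum_distrib_left mult.assoc)
    ultimately show ?thesis
      by (simp add: sum_subtractf[symmetric] vector_sub_rdistrib algebra_simps)
  qed
  also have "\<dots> = 0" using insert.prems(4) by simp
  finally have "\<forall>k\<in>K. x k * (lam k - lam j) = 0"
    using insert by (intro insert.IH) auto
  moreover have "lam k \<noteq> lam j" if "k \<in> K" for k
    using inj_onD[OF insert.prems(1), of k j] that insert.hyps(2) by auto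
  ultimately have xK: "\<forall>k\<in>K. x k = 0" by simp
  then have "x j *s v j = 0" using insert by simp
  then show ?case using xK insert.prems(3) by simp
qed

lemma distinct_eigenvalues_imp_diagonalizable:
  fixes M :: "complex^'n^'n"
  assumes "distinct_eigenvalues M"
  shows "diagonalizable M"
proof -
  have card: "card (UNIV :: 'n set) = card (eigenvalues M)"
    using assms by (simp add: distinct_eigenvalues_def)
  then have "finite (eigenvalues M)" by (intro card_ge_0_finite) (simp flip: card)
  then obtain lam where "bij_betw lam (UNIV :: 'n set) (eigenvalues M)"
    using finite_same_card_bij[OF finite_class.finite_UNIV _ card] by blast
  then have inj: "inj lam" and lam: "\<And>k. lam k \<in> eigenvalues M" by (auto simp: bij_betw_def)
  have "\<forall>k. \<exists>w. w \<noteq> 0 \<and> M *v w = lam k *s w"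
    using lam by (simp add: eigenvalues_def)
  then obtain v where v: "\<And>k. v k \<noteq> 0" "\<And>k. M *v v k = lam k *s v k"
    by (metis (mono_tags))
  define P :: "complex^'n^'n" where "P = (\<chi> i k. v k $ i)"
  define D :: "complex^'n^'n" where "D = (\<chi> i j. if i = j then lam i else 0)"
  have "column k P = v k" for k
    by (simp add: P_def column_def)
  moreover have "\<forall>k. c k = 0" if "(\<Sum>k\<in>UNIV. c k *s v k) = 0" for c
    using eigenvectors_independent[OF finite_class.finite_UNIV _ v(2) v(1) that] inj by blast
  ultimately have invP: "invertible P"
    by (simp add: invertible_left_inverse matrix_left_invertible_independent_columns)
  have "(M ** P) $ i $ k = (P ** D) $ i $ k" for i k
  proof -
    have "(P ** D) $ i $ k = (\<Sum>j\<in>UNIV. v j $ i * (if j = k then lam j else 0))"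
      by (simp add: matrix_matrix_mult_def P_def D_def)
    also have "\<dots> = (\<Sum>j\<in>UNIV. if j = k then lam k * v k $ i else 0)"
      by (rule sum.cong) auto
    also have "\<dots> = (M *v v k) $ i" by (simp add: v(2))
    also have "\<dots> = (M ** P) $ i $ k"
      by (simp add: matrix_matrix_mult_def matrix_vector_mult_def P_def)
    finally show ?thesis by simp
  qed
  then have "M ** P = P ** D" by (simp add: Finite_Cartesian_Product.vec_eq_iff)
  then have "M = P ** D ** matrix_inv P"
    by (metis invP matrix_inv_right matrix_mul_assoc matrix_mul_rid)
  moreover have "is_diagonal D" by (simp add: is_diagonal_def D_def)
  ultimately show ?thesis
    unfolding diagonalizable_def using invP by blast
qed

lemma eigenvalues_diagonal:
  "eigenvalues (\<chi> i j. if i = j then d i else 0 :: complex^'n^'n) = range d"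
proof -
  let ?D = "\<chi> i j. if i = j then d i else 0 :: complex^'n^'n"
  let ?e = "\<lambda>i. \<chi> j. if j = i then 1 else 0 :: complex^'n"
  have Dv: "(?D *v v) $ i = d i * v $ i" for v i
  proof -
    have "(?D *v v) $ i = (\<Sum>j\<in>UNIV. (if i = j then d i else 0) * v $ j)"
      by (simp add: matrix_vector_mult_def)
    also have "\<dots> = (\<Sum>j\<in>UNIV. if j = i then d i * v $ i else 0)"
      by (rule sum.cong) auto
    finally show ?thesis by simp
  qed
  have eigenvalue: "c = d i" if "?D *v v = c *s v" "v $ i \<noteq> 0" for c v i
  proof -
    have "c * v $ i = d i * v $ i" using Dv[of v i] that(1) by simp
    then show ?thesis using that(2) by simp
  qed
  have eigenvector: "?e i \<noteq> 0" "?D *v ?e i = d i *s ?e i" for i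
    by (auto simp: Dv Finite_Cartesian_Product.vec_eq_iff)
  have "c \<in> eigenvalues ?D \<longleftrightarrow> c \<in> range d" for c
  proof
    assume "c \<in> eigenvalues ?D"
    then obtain v where v: "v \<noteq> 0" "?D *v v = c *s v" unfolding eigenvalues_def by blast
    then obtain i where "v $ i \<noteq> 0" by (metis Finite_Cartesian_Product.vec_eq_iff zero_index)
    then have "c = d i" by (rule eigenvalue[OF v(2)])
    then show "c \<in> range d" by simp
  next
    assume "c \<in> range d"
    then obtain i where "c = d i" by blast
    then show "c \<in> eigenvalues ?D"
      unfolding eigenvalues_def using eigenvector[of i] by (intro CollectI exI[of _ "?e i"]) simp
  qed
  then show ?thesis by blast
qed

lemma exists_invertible_distinct_eigenvalues:
  "\<exists>D :: complex^'n^'n. invertible D \<and> distinct_eigenvalues D"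
proof -
  obtain f :: "'n \<Rightarrow> nat" where "inj f"
    using finite_imp_inj_to_nat_seg[of "UNIV :: 'n set"] by auto
  define d :: "'n \<Rightarrow> complex" where "d i = of_nat (Suc (f i))" for i
  define D :: "complex^'n^'n" where "D = (\<chi> i j. if i = j then d i else 0)"
  have "inj d" using \<open>inj f\<close> by (simp add: inj_def d_def del: of_nat_Suc)
  then have "distinct_eigenvalues D"
    by (simp add: distinct_eigenvalues_def D_def eigenvalues_diagonal card_image)
  moreover have "det D \<noteq> 0"
    by (subst det_diagonal) (simp_all add: D_def d_def del: of_nat_Suc)
  ultimately show ?thesis by (auto simp: invertible_det_nz)
qed


definition factorization_poly :: "complex^'n^'n \<Rightarrow> complex^'n^'n \<Rightarrow> complex" where
  "factorization_poly B C = distinct_eigenvalues_poly C (mat 1) * distinct_eigenvalues_poly B C"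

lemma factorization_poly_nonzero_iff:
  "factorization_poly B C \<noteq> 0 \<longleftrightarrow>
     invertible C \<and> distinct_eigenvalues C \<and> distinct_eigenvalues (matrix_inv C ** B)"
  by (auto simp: factorization_poly_def distinct_eigenvalues_poly_nonzero_iff matrix_inv_mat_1
      invertible_mat_1)

lemma poly_fun_factorization_poly: "poly_fun (factorization_poly B)"
  unfolding factorization_poly_def[abs_def]
  by (intro poly_fun.mult poly_fun_distinct_eigenvalues_poly) (simp_all add: poly_fun.intros)

lemma ex_factorization_poly_nonzero:
  fixes B :: "complex^'n^'n"
  assumes "invertible B"
  shows "\<exists>C. factorization_poly B C \<noteq> 0"
proof -
  obtain D :: "complex^'n^'n" where D: "invertible D" "distinct_eigenvalues D"
    using exists_invertible_distinct_eigenvalues by blast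
  define Y where "Y = B ** matrix_inv D"
  have invY: "invertible Y"
    unfolding Y_def by (intro invertible_mult assms invertible_matrix_inv D(1))
  have "Y ** D = B" by (simp add: Y_def matrix_inv_left D(1) flip: matrix_mul_assoc)
  then have "matrix_inv Y ** B = D"
    by (metis invY matrix_inv_left matrix_mul_assoc matrix_mul_lid)
  then have "distinct_eigenvalues_poly D (mat 1) \<noteq> 0" "distinct_eigenvalues_poly B Y \<noteq> 0"
    using D invY
    by (simp_all add: distinct_eigenvalues_poly_nonzero_iff matrix_inv_mat_1 invertible_mat_1)
  then show ?thesis
    using poly_fun_common_nonzero[of "\<lambda>C. distinct_eigenvalues_poly C (mat 1)"
        "distinct_eigenvalues_poly B"]
    by (auto simp: factorization_poly_def poly_fun_distinct_eigenvalues_poly poly_fun.intros)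
qed

theorem mainTheorem5:
  fixes B :: "complex^'n^'n"
  assumes "invertible B"
  shows "(\<exists>C1 C2. B = C1 ** C2 \<and>
            invertible C1 \<and> diagonalizable C1 \<and> distinct_eigenvalues C1 \<and>
            invertible C2 \<and> diagonalizable C2 \<and> distinct_eigenvalues C2)
       \<and> (\<exists>U. zariski_open U \<and> U \<noteq> {} \<and>
            (\<forall>C1\<in>U. invertible C1 \<and> diagonalizable C1 \<and> distinct_eigenvalues C1 \<and>
               (let C2 = matrix_inv C1 ** B in
                  B = C1 ** C2 \<and> invertible C2 \<and> diagonalizable C2 \<and> distinct_eigenvalues C2)))"
proof -
  define U where "U = {C. factorization_poly B C \<noteq> 0}"
  have "zariski_open U"
    unfolding zariski_open_def U_def
    by (intro exI[of _ "{factorization_poly B}"]) (auto simp: poly_fun_factorization_poly)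
  moreover have "U \<noteq> {}"
    using ex_factorization_poly_nonzero[OF assms] by (simp add: U_def)
  moreover have "invertible C \<and> diagonalizable C \<and> distinct_eigenvalues C \<and>
      B = C ** C2 \<and> invertible C2 \<and> diagonalizable C2 \<and> distinct_eigenvalues C2"
    if "C \<in> U" and C2: "C2 = matrix_inv C ** B" for C C2
  proof -
    from that have C: "invertible C" "distinct_eigenvalues C" "distinct_eigenvalues C2"
      by (simp_all add: U_def factorization_poly_nonzero_iff)
    then have "B = C ** C2" and "invertible C2"
      by (simp_all add: C2 matrix_mul_assoc matrix_inv_right invertible_mult invertible_matrix_inv assms)
    with C show ?thesis by (simp add: distinct_eigenvalues_imp_diagonalizable)
  qed
  ultimately show ?thesis
    unfolding Let_def by blast
qed

end
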